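(* Consider the weighted median search process described in the context. Let $I=\{\tau+1,\dots,\tau+k\}$ be an interval of $k$ consecutive steps such that some vertex $x$ is heavy with respect to the weights $\omega_{t-1}$ at the time of each query $t\in I$, and $x$ remains heavy with respect to $\omega_{\tau+k}$ after the last query in $I$. Then, for any sequence of answers, $$\omega_{\tau+k}(V\setminus\{x\})\le \frac{\omega_\tau(V)}{2^k}.$$
   Context: $G=(V,E)$ is a connected undirected unweighted graph, $0<p<\frac12$, $d(u,v)$ is the graph distance. Positive weights $\omega_t(v)$ are maintained, with $\omega(U)=\sum_{u\in U}\omega(u)$; a vertex $v$ is heavy (w.r.t. $\omega$) if $\omega(v)/\omega(V)\ge\frac12$. A median w.r.t. $\omega$ is a vertex $q$ minimizing $\sum_{u\in V}d(u,q)\omega(u)$. In step $t$ the process queries a median $q$ w.r.t. $\omega_{t-1}$, where a heavy vertex is chosen whenever one exists (a heavy vertex is always a median). The answer is either "yes" or a neighbor $u$ of $q$ (a "no-answer"). A vertex $v$ is compatible with the answer if: for a yes-answer, $v=q$; for a no-answer $u$ with $q$ not heavy, $u$ lies on a shortest $q$–$v$ path; for a no-answer with $q$ heavy, $v\neq q$. Bayesian update: $\omega_t(v)=(1-p)\omega_{t-1}(v)$ if $v$ is compatible and $\omega_t(v)=p\,\omega_{t-1}(v)$ otherwise. *)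

theory Defs
  imports Complex_Main
begin

definition graph :: "'a set \<Rightarrow> ('a \<Rightarrow> 'a \<Rightarrow> bool) \<Rightarrow> bool" where
  "graph V E \<longleftrightarrow> finite V \<and> V \<noteq> {} \<and>
     (\<forall>u v. E u v \<longrightarrow> u \<in> V \<and> v \<in> V \<and> E v u \<and> u \<noteq> v)"

fun walk :: "'a set \<Rightarrow> ('a \<Rightarrow> 'a \<Rightarrow> bool) \<Rightarrow> 'a list \<Rightarrow> bool" where
  "walk V E [] = False"
| "walk V E [v] = (v \<in> V)"
| "walk V E (u # v # xs) = (u \<in> V \<and> E u v \<and> walk V E (v # xs))"

definition connected_graph :: "'a set \<Rightarrow> ('a \<Rightarrow> 'a \<Rightarrow> bool) \<Rightarrow> bool" where
  "connected_graph V E \<longleftrightarrow> graph V E \<and>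
     (\<forall>u\<in>V. \<forall>v\<in>V. \<exists>xs. walk V E xs \<and> hd xs = u \<and> last xs = v)"

definition gdist :: "'a set \<Rightarrow> ('a \<Rightarrow> 'a \<Rightarrow> bool) \<Rightarrow> 'a \<Rightarrow> 'a \<Rightarrow> nat" where
  "gdist V E u v = (LEAST n. \<exists>xs. walk V E xs \<and> hd xs = u \<and> last xs = v \<and> length xs = n + 1)"

definition on_shortest_path :: "'a set \<Rightarrow> ('a \<Rightarrow> 'a \<Rightarrow> bool) \<Rightarrow> 'a \<Rightarrow> 'a \<Rightarrow> 'a \<Rightarrow> bool" where
  "on_shortest_path V E u q v \<longleftrightarrow>
     (\<exists>xs. walk V E xs \<and> hd xs = q \<and> last xs = v \<and> length xs = gdist V E q v + 1 \<and> u \<in> set xs)"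

definition heavy :: "'a set \<Rightarrow> ('a \<Rightarrow> real) \<Rightarrow> 'a \<Rightarrow> bool" where
  "heavy V w v \<longleftrightarrow> v \<in> V \<and> w v / sum w V \<ge> 1/2"

definition is_median :: "'a set \<Rightarrow> ('a \<Rightarrow> 'a \<Rightarrow> bool) \<Rightarrow> ('a \<Rightarrow> real) \<Rightarrow> 'a \<Rightarrow> bool" where
  "is_median V E w q \<longleftrightarrow> q \<in> V \<and>
     (\<forall>y\<in>V. (\<Sum>u\<in>V. real (gdist V E u q) * w u) \<le> (\<Sum>u\<in>V. real (gdist V E u y) * w u))"

text \<open>Answers: None = "yes", Some u = no-answer pointing to neighbor u.
  Compatibility of v with answer a to query q, given the current weights w.\<close>
definition compatible :: "'a set \<Rightarrow> ('a \<Rightarrow> 'a \<Rightarrow> bool) \<Rightarrow> ('a \<Rightarrow> real) \<Rightarrow> 'a \<Rightarrow> 'a option \<Rightarrow> 'a \<Rightarrow> bool" where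
  "compatible V E w q a v = (case a of
      None \<Rightarrow> v = q
    | Some u \<Rightarrow> (if heavy V w q then v \<noteq> q else on_shortest_path V E u q v))"

text \<open>The weighted median search process: omega t are the weights after step t,
  q t is the vertex queried in step t (t \<ge> 1), ans t the answer.\<close>
definition median_process ::
  "'a set \<Rightarrow> ('a \<Rightarrow> 'a \<Rightarrow> bool) \<Rightarrow> real \<Rightarrow> (nat \<Rightarrow> 'a \<Rightarrow> real) \<Rightarrow> (nat \<Rightarrow> 'a) \<Rightarrow> (nat \<Rightarrow> 'a option) \<Rightarrow> bool" where
  "median_process V E p \<omega> q ans \<longleftrightarrow>
     (\<forall>v\<in>V. \<omega> 0 v > 0) \<and>
     (\<forall>t\<ge>1.
        is_median V E (\<omega> (t-1)) (q t) \<and>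
        ((\<exists>v\<in>V. heavy V (\<omega> (t-1)) v) \<longrightarrow> heavy V (\<omega> (t-1)) (q t)) \<and>
        (case ans t of None \<Rightarrow> True | Some u \<Rightarrow> E (q t) u) \<and>
        (\<forall>v\<in>V. \<omega> t v = (if compatible V E (\<omega> (t-1)) (q t) (ans t) v then 1 - p else p) * \<omega> (t-1) v))"

end

theory Submission
  imports Defs
begin

text \<open>While some vertex x stays heavy, every query is either x itself or the only other vertex
  (two heavy vertices leave no room for a third), so each answer multiplies the weight of x
  by one of p, 1 - p and the weight of every other vertex by the other one. Hence the product
  \<open>\<omega>(x) \<cdot> \<omega>(V - {x})\<close> shrinks by the factor p(1 - p) \<le> 1/4 per step. It starts at most
  \<open>\<omega>\<^sub>\<tau>(V)\<^sup>2/4\<close> by AM-GM, and at the end the heaviness of x gives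
  \<open>\<omega>(V - {x}) \<le> \<omega>(x)\<close>, so \<open>\<omega>(V - {x})\<^sup>2\<close> is bounded by that product.\<close>

lemma median_process_SucD:
  assumes "median_process V E p \<omega> q ans"
  shows "\<exists>v\<in>V. heavy V (\<omega> t) v \<Longrightarrow> heavy V (\<omega> t) (q (Suc t))"
    and "v \<in> V \<Longrightarrow> \<omega> (Suc t) v =
           (if compatible V E (\<omega> t) (q (Suc t)) (ans (Suc t)) v then 1 - p else p) * \<omega> t v"
  using assms[unfolded median_process_def, THEN conjunct2, rule_format, of "Suc t"] by auto

lemma median_process_weights_pos:
  assumes "median_process V E p \<omega> q ans" and "0 < p" and "p < 1" and "v \<in> V"
  shows "0 < \<omega> t v"
proof (induction t)
  case 0
  then show ?case using assms(1,4) unfolding median_process_def by blast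
next
  case (Suc t)
  then show ?case using median_process_SucD(2)[OF assms(1,4)] assms(2,3) by simp
qed

lemma heavy_iff_complement_le:
  assumes "finite V" and "\<forall>v\<in>V. 0 < w v"
  shows "heavy V w x \<longleftrightarrow> x \<in> V \<and> sum w (V - {x}) \<le> w x"
proof (cases "x \<in> V")
  case True
  have "0 < sum w V" using assms True by (intro sum_pos) auto
  moreover have "sum w V = w x + sum w (V - {x})" using assms(1) True by (simp add: sum.remove)
  ultimately show ?thesis using True unfolding heavy_def by (simp add: divide_simps)
qed (simp add: heavy_def)

lemma two_heavy_vertices_doubleton:
  assumes "finite V" and "\<forall>v\<in>V. 0 < w v"
    and "heavy V w x" and "heavy V w y" and "x \<noteq> y"
  shows "V - {x} = {y}"
proof -
  have x: "x \<in> V" "sum w (V - {x}) \<le> w x" and y: "y \<in> V" "sum w (V - {y}) \<le> w y"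
    using assms(3,4) unfolding heavy_iff_complement_le[OF assms(1,2)] by auto
  define R where "R = V - {x, y}"
  have "V - {x} = insert y R" and "V - {y} = insert x R"
    using x(1) y(1) assms(5) unfolding R_def by auto
  moreover have "finite R" and "x \<notin> R" and "y \<notin> R" using assms(1) unfolding R_def by auto
  ultimately have "sum w (V - {x}) = w y + sum w R" and "sum w (V - {y}) = w x + sum w R"
    by simp_all
  then have "sum w R \<le> 0" using x(2) y(2) by linarith
  moreover have "0 < sum w R" if "R \<noteq> {}"
    using that assms(1,2) unfolding R_def by (intro sum_pos) auto
  ultimately have "R = {}" by fastforce
  then show ?thesis using y(1) assms(5) unfolding R_def by blast
qed

lemma compatible_with_heavy_query:
  assumes "finite V" and "\<forall>v\<in>V. 0 < w v"
    and "heavy V w x" and "heavy V w q"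
  obtains "\<forall>v\<in>V. compatible V E w q a v \<longleftrightarrow> v = x"
    | "\<forall>v\<in>V. compatible V E w q a v \<longleftrightarrow> v \<noteq> x"
proof -
  have answer: "compatible V E w q a v \<longleftrightarrow> (if a = None then v = q else v \<noteq> q)" for v
    using assms(4) unfolding compatible_def by (cases a) auto
  show thesis
  proof (cases "q = x")
    case False
    then have "\<forall>v\<in>V. v = q \<longleftrightarrow> v \<noteq> x"
      using two_heavy_vertices_doubleton[OF assms(1-4)] by blast
    then show thesis using that answer by (cases "a = None") auto
  qed (use that answer in \<open>cases "a = None"; auto\<close>)
qed

lemma mult_le_square_of_sum_div_4: "(a::real) * b \<le> (a + b)\<^sup>2 / 4"
  using zero_le_power2[of "a - b"] by (simp add: power2_eq_square algebra_simps)

lemma quarter_power_bound: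
  fixes a P W :: real
  assumes "0 \<le> a" and "a \<le> 1/4" and "0 \<le> P" and "P \<le> W\<^sup>2 / 4"
  shows "a ^ k * P \<le> (W / 2 ^ (k + 1))\<^sup>2"
proof -
  have "((2::real) ^ (k + 1))\<^sup>2 = 4 ^ k * 4"
    by (simp add: power2_eq_square power_mult_distrib[symmetric])
  then have "(W / 2 ^ (k + 1))\<^sup>2 = (1/4) ^ k * (W\<^sup>2 / 4)"
    by (simp add: power_divide power_one_over)
  moreover have "a ^ k * P \<le> (1/4) ^ k * (W\<^sup>2 / 4)"
    using assms by (intro mult_mono power_mono) auto
  ultimately show ?thesis by simp
qed

definition split_product :: "'a set \<Rightarrow> ('a \<Rightarrow> real) \<Rightarrow> 'a \<Rightarrow> real" where
  "split_product V w x = w x * sum w (V - {x})"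

lemma split_product_le_quarter_square:
  assumes "finite V" and "x \<in> V"
  shows "split_product V w x \<le> (sum w V)\<^sup>2 / 4"
proof -
  have "sum w V = w x + sum w (V - {x})" using assms by (simp add: sum.remove)
  then show ?thesis unfolding split_product_def using mult_le_square_of_sum_div_4 by simp
qed

lemma heavy_complement_square_le_split_product:
  assumes "finite V" and "\<forall>v\<in>V. 0 < w v" and "heavy V w x"
  shows "(sum w (V - {x}))\<^sup>2 \<le> split_product V w x"
proof -
  have "0 \<le> sum w (V - {x})" using assms(2) by (intro sum_nonneg) auto
  then show ?thesis
    using assms heavy_iff_complement_le unfolding split_product_def power2_eq_square
    by (metis mult_right_mono)
qed

lemma median_process_split_product_step:
  assumes "finite V" and "median_process V E p \<omega> q ans"
    and "0 < p" and "p < 1" and "heavy V (\<omega> t) x"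
  shows "split_product V (\<omega> (Suc t)) x = p * (1 - p) * split_product V (\<omega> t) x"
proof -
  have pos: "\<forall>v\<in>V. 0 < \<omega> t v" using median_process_weights_pos[OF assms(2-4)] by blast
  have x: "x \<in> V" using assms(5) unfolding heavy_def by blast
  have hq: "heavy V (\<omega> t) (q (Suc t))" using median_process_SucD(1)[OF assms(2)] assms(5) x by blast
  have scaled: "split_product V (\<omega> (Suc t)) x = c * (1 - c) * split_product V (\<omega> t) x"
    if "\<omega> (Suc t) x = c * \<omega> t x" and "\<forall>v\<in>V - {x}. \<omega> (Suc t) v = (1 - c) * \<omega> t v" for c
    using that unfolding split_product_def by (simp add: sum_distrib_left mult_ac)
  let ?C = "compatible V E (\<omega> t) (q (Suc t)) (ans (Suc t))"
  have update: "v \<in> V \<Longrightarrow> \<omega> (Suc t) v = (if ?C v then 1 - p else p) * \<omega> t v" for v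
    using median_process_SucD(2)[OF assms(2)] .
  from compatible_with_heavy_query[OF assms(1) pos assms(5) hq, where E = E and a = "ans (Suc t)"]
  show ?thesis
  proof cases
    case 1
    then show ?thesis using scaled[of "1 - p"] update x by (simp add: mult.commute)
  next
    case 2
    then show ?thesis using scaled[of p] update x by simp
  qed
qed

lemma median_process_split_product_iterate:
  assumes "finite V" and "median_process V E p \<omega> q ans"
    and "0 < p" and "p < 1" and "\<forall>t\<in>{\<tau>..<\<tau> + k}. heavy V (\<omega> t) x"
  shows "split_product V (\<omega> (\<tau> + k)) x = (p * (1 - p)) ^ k * split_product V (\<omega> \<tau>) x"
  using assms(5)
proof (induction k)
  case (Suc k)
  then show ?case
    using median_process_split_product_step[OF assms(1-4), of "\<tau> + k"] by simp
qed simp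

theorem lemma4:
  fixes V :: "'a set" and E :: "'a \<Rightarrow> 'a \<Rightarrow> bool" and p :: real
    and \<omega> :: "nat \<Rightarrow> 'a \<Rightarrow> real" and q :: "nat \<Rightarrow> 'a" and ans :: "nat \<Rightarrow> 'a option"
    and \<tau> k :: nat and x :: 'a
  assumes "connected_graph V E"
    and "0 < p" and "p < 1/2"
    and "median_process V E p \<omega> q ans"
    and "\<forall>t\<in>{\<tau>+1..\<tau>+k}. heavy V (\<omega> (t-1)) x"
    and "heavy V (\<omega> (\<tau>+k)) x"
  shows "sum (\<omega> (\<tau>+k)) (V - {x}) \<le> sum (\<omega> \<tau>) V / 2^k"
proof -
  define W where "W = sum (\<omega> \<tau>) V"
  have fin: "finite V" using assms(1) unfolding connected_graph_def graph_def by blast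
  have x: "x \<in> V" using assms(6) unfolding heavy_def by blast
  have pos: "\<forall>v\<in>V. 0 < \<omega> t v" for t using median_process_weights_pos[OF assms(4,2)] assms(3) by simp
  have W: "0 \<le> W" unfolding W_def using pos by (simp add: sum_nonneg less_imp_le)
  have heavy_in_I: "\<forall>t\<in>{\<tau>..<\<tau> + k}. heavy V (\<omega> t) x"
  proof
    fix t assume "t \<in> {\<tau>..<\<tau> + k}"
    then show "heavy V (\<omega> t) x" using assms(5)[rule_format, of "Suc t"] by simp
  qed
  have "(sum (\<omega> (\<tau>+k)) (V - {x}))\<^sup>2 \<le> split_product V (\<omega> (\<tau> + k)) x"
    using heavy_complement_square_le_split_product[OF fin pos assms(6)] .
  also have "\<dots> = (p * (1 - p)) ^ k * split_product V (\<omega> \<tau>) x"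
    using median_process_split_product_iterate[OF fin assms(4,2) _ heavy_in_I] assms(3) by simp
  also have "\<dots> \<le> (W / 2 ^ (k + 1))\<^sup>2"
  proof (rule quarter_power_bound)
    show "p * (1 - p) \<le> 1/4" using mult_le_square_of_sum_div_4[of p "1 - p"] by simp
    show "0 \<le> split_product V (\<omega> \<tau>) x"
      unfolding split_product_def using pos x
      by (intro mult_nonneg_nonneg sum_nonneg) (auto intro: less_imp_le)
    show "split_product V (\<omega> \<tau>) x \<le> W\<^sup>2 / 4"
      unfolding W_def using split_product_le_quarter_square[OF fin x] .
  qed (use assms(2,3) in simp)
  finally have "sum (\<omega> (\<tau>+k)) (V - {x}) \<le> W / 2 ^ (k + 1)"
    by (rule power2_le_imp_le) (use W in simp)
  also have "\<dots> \<le> W / 2 ^ k" using W by (intro divide_left_mono) auto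
  finally show ?thesis unfolding W_def .
qed

end
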